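(* Let $W,V$ be B-DMCs on a common output alphabet. Let $B_1,B_2,\dots$ be i.i.d. uniform on $\{-,+\}$, set $i_0=1$ and $i_{n}=2i_{n-1}-1$ if $B_n=-$, $i_n=2i_{n-1}$ if $B_n=+$, and let $X_n=\mathbb P_W\big[L_{V_{2^n}^{(i_n)}}(y_1^{2^n})=1\big]$. Then $(X_n)_{n\ge0}$ is a submartingale with respect to the filtration generated by $B_1,B_2,\dots$, taking values in $[0,1]$; it converges almost surely, and its almost sure limit takes values in $\{0,1\}$.
   Context: A B-DMC $W:\{0,1\}\to\mathcal Y$ is given by transition probabilities $W(y|x)$, $\mathcal Y$ finite; $L_W(y)=W(y|1)/W(y|0)$. For a B-DMC $W$: $W^-(y_1y_2|u_1)=\sum_{u_2}\tfrac12W(y_1|u_1\oplus u_2)W(y_2|u_2)$, $W^+(y_1y_2u_1|u_2)=\tfrac12W(y_1|u_1\oplus u_2)W(y_2|u_2)$. Synthetic channels: $W_1^{(1)}=W$, $W_{2N}^{(2i-1)}=(W_N^{(i)})^-$, $W_{2N}^{(2i)}=(W_N^{(i)})^+$; an output of $W_N^{(i)}$ is written $(y_1^N,u_1^{i-1})$ as in Arıkan's construction, and $L_{V_N^{(i)}}(y_1^N):=L_{V_N^{(i)}}(y_1^N,0_1^{i-1})$. These satisfy, with $L_1=L_{V_N^{(i)}}(y_1^N)$, $L_2=L_{V_N^{(i)}}(y_{N+1}^{2N})$: $L_{V_{2N}^{(2i-1)}}(y_1^{2N})=\frac{L_1+L_2}{1+L_1L_2}$, $L_{V_{2N}^{(2i)}}(y_1^{2N})=L_1L_2$.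 Notation: $W(y_1^N|0_1^N)=\prod_{j}W(y_j|0)$ and $\mathbb P_W[E]=\sum_{y_1^N}W(y_1^N|0_1^N)\mathbf 1\{E\}$. *)

theory Defs
  imports "HOL-Probability.Probability"
begin

(* A B-DMC W : {0,1} -> Y with finite output alphabet 'y; the input bit 0 is False,
   1 is True; W y x is the transition probability W(y|x). *)
definition bdmc :: "('y::finite \<Rightarrow> bool \<Rightarrow> real) \<Rightarrow> bool" where
  "bdmc W \<longleftrightarrow> (\<forall>y x. 0 \<le> W y x) \<and> (\<forall>x. (\<Sum>y\<in>UNIV. W y x) = 1)"

(* synth V bs ys u = V_N^{(i)}((y_1^N, 0_1^{i-1}) | u), the transition probability of the
   synthetic channel at output y_1^N together with the all-zero past bits.
   bs = [B_n, B_{n-1}, ..., B_1] (outermost transform first), True = '+', False = '-',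
   N = 2^(length bs) = length ys; the first half of ys feeds L_1, the second half L_2. *)
fun synth :: "('y \<Rightarrow> bool \<Rightarrow> real) \<Rightarrow> bool list \<Rightarrow> 'y list \<Rightarrow> bool \<Rightarrow> real" where
  "synth V [] ys u = V (hd ys) u"
| "synth V (b # bs) ys u =
     (let ys1 = take (length ys div 2) ys; ys2 = drop (length ys div 2) ys in
      if b then (1/2) * synth V bs ys1 u * synth V bs ys2 u
      else (\<Sum>u2\<in>UNIV. (1/2) * synth V bs ys1 (u \<noteq> u2) * synth V bs ys2 u2))"

(* The event L_{V_N^{(i)}}(y_1^N) = 1, i.e. V_N^{(i)}(y,0|1) / V_N^{(i)}(y,0|0) = 1,
   with the ratio read projectively (0/0 counts as 1, a/0 = infinity for a > 0). *)
definition LR_is_one :: "('y \<Rightarrow> bool \<Rightarrow> real) \<Rightarrow> bool list \<Rightarrow> 'y list \<Rightarrow> bool" where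
  "LR_is_one V bs ys \<longleftrightarrow> synth V bs ys True = synth V bs ys False"

definition PW_LR_one :: "('y::finite \<Rightarrow> bool \<Rightarrow> real) \<Rightarrow> ('y \<Rightarrow> bool \<Rightarrow> real) \<Rightarrow> bool list \<Rightarrow> real" where
  "PW_LR_one W V bs =
     (\<Sum>ys\<in>{ys. length ys = 2 ^ length bs}.
        (\<Prod>j<length ys. W (ys ! j) False) * (if LR_is_one V bs ys then 1 else 0))"

(* Sample space of B_1, B_2, ...: omega k = B_{k+1}, i.i.d. uniform on {-,+} = {False, True}. *)
definition coin_space :: "(nat \<Rightarrow> bool) measure" where
  "coin_space = PiM UNIV (\<lambda>_. measure_pmf (pmf_of_set (UNIV :: bool set)))"

definition coin_filtration :: "nat \<Rightarrow> (nat \<Rightarrow> bool) measure" where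
  "coin_filtration n = sigma (space coin_space)
      {{\<omega> \<in> space coin_space. \<omega> k = b} | k b. k < n}"

definition path :: "nat \<Rightarrow> (nat \<Rightarrow> bool) \<Rightarrow> bool list" where
  "path n \<omega> = rev (map \<omega> [0..<n])"

definition submartingale :: "'a measure \<Rightarrow> (nat \<Rightarrow> 'a measure) \<Rightarrow> (nat \<Rightarrow> 'a \<Rightarrow> real) \<Rightarrow> bool" where
  "submartingale M F X \<longleftrightarrow>
     (\<forall>n. subalgebra M (F n)) \<and> (\<forall>n m. n \<le> m \<longrightarrow> sets (F n) \<subseteq> sets (F m)) \<and>
     (\<forall>n. X n \<in> borel_measurable (F n)) \<and> (\<forall>n. integrable M (X n)) \<and>
     (\<forall>n. AE \<omega> in M. X n \<omega> \<le> real_cond_exp M (F n) (X (Suc n)) \<omega>)"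

end

theory Submission
  imports Defs
begin

(*
  At a node bs of the polarization tree let p be the W-probability that the likelihood ratio of
  the synthetic channel equals one. Splitting the output into its two halves, which are
  independent under W, the ratio of the minus channel equals one iff that of one of the halves
  does, and the ratio of the plus channel equals one if those of both halves do. Hence the
  children satisfy p- = 2p - p^2 and p+ >= p^2, whose average is at least p, so along a uniformly
  random path these probabilities form a [0,1]-valued submartingale, which converges almost surely
  by Doob's upcrossing inequality. Almost every path takes infinitely many minus steps, where
  X(n+1) = 2 X(n) - X(n)^2; therefore the limit is a fixed point of t -> 2t - t^2, that is 0 or 1.
*)

lemma finite_lists_length_UNIV: "finite {xs :: 'a::finite list. length xs = n}"
  using finite_lists_length_eq[of "UNIV :: 'a set" n] by simp

lemma sum_lists_length_Suc:
  fixes g :: "'a::finite list \<Rightarrow> 'b::comm_monoid_add"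
  shows "(\<Sum>xs | length xs = Suc n. g xs) = (\<Sum>x\<in>UNIV. \<Sum>xs | length xs = n. g (x # xs))"
proof -
  have "{xs :: 'a list. length xs = Suc n} = case_prod (#) ` (UNIV \<times> {xs. length xs = n})"
    by (auto simp: length_Suc_conv image_iff)
  moreover have "inj_on (case_prod (#)) (UNIV \<times> {xs :: 'a list. length xs = n})"
    by (auto simp: inj_on_def)
  ultimately show ?thesis
    using finite_lists_length_UNIV by (simp add: sum.reindex sum.cartesian_product case_prod_unfold)
qed

lemma sum_lists_length_add:
  fixes g :: "'a::finite list \<Rightarrow> 'b::comm_monoid_add"
  shows "(\<Sum>xs | length xs = m + n. g xs) =
    (\<Sum>xs | length xs = m. \<Sum>zs | length zs = n. g (xs @ zs))"
proof -
  have "{xs :: 'a list. length xs = m + n} =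
      case_prod (@) ` ({xs. length xs = m} \<times> {zs. length zs = n})"
  proof (intro set_eqI iffI)
    fix xs :: "'a list" assume "xs \<in> {xs. length xs = m + n}"
    then show "xs \<in> case_prod (@) ` ({xs. length xs = m} \<times> {zs. length zs = n})"
      by (intro image_eqI[of _ _ "(take m xs, drop m xs)"]) auto
  qed auto
  moreover have "inj_on (case_prod (@)) ({xs :: 'a list. length xs = m} \<times> {zs. length zs = n})"
    by (auto simp: inj_on_def)
  ultimately show ?thesis
    using finite_lists_length_UNIV by (simp add: sum.reindex sum.cartesian_product case_prod_unfold)
qed

section \<open>One polarization step of the event L = 1\<close>

definition zero_input_prob :: "('y \<Rightarrow> bool \<Rightarrow> real) \<Rightarrow> 'y list \<Rightarrow> real" where
  "zero_input_prob W ys = (\<Prod>y\<leftarrow>ys. W y False)"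

lemma zero_input_prob_append:
  "zero_input_prob W (xs @ ys) = zero_input_prob W xs * zero_input_prob W ys"
  by (simp add: zero_input_prob_def)

lemma zero_input_prob_nonneg: "bdmc W \<Longrightarrow> 0 \<le> zero_input_prob W ys"
  unfolding zero_input_prob_def bdmc_def by (induction ys) auto

lemma sum_zero_input_prob: "bdmc W \<Longrightarrow> (\<Sum>ys | length ys = n. zero_input_prob W ys) = 1"
proof (induction n)
  case (Suc n)
  then show ?case
    by (simp add: sum_lists_length_Suc zero_input_prob_def flip: sum_distrib_left)
       (simp add: bdmc_def flip: sum_distrib_right)
qed (simp add: zero_input_prob_def)

lemma PW_LR_one_eq:
  "PW_LR_one W V bs =
    (\<Sum>ys | length ys = 2 ^ length bs. zero_input_prob W ys * of_bool (LR_is_one V bs ys))"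
proof -
  have prod_eq: "(\<Prod>j<length ys. W (ys ! j) False) = zero_input_prob W ys" for ys
    by (induction ys)
       (simp_all add: prod.lessThan_Suc_shift zero_input_prob_def del: prod.lessThan_Suc)
  show ?thesis unfolding PW_LR_one_def prod_eq by (simp add: of_bool_def)
qed

lemma PW_LR_one_bounds:
  assumes "bdmc W"
  shows "PW_LR_one W V bs \<in> {0..1}"
proof -
  have "PW_LR_one W V bs \<le> (\<Sum>ys | length ys = 2 ^ length bs. zero_input_prob W ys)"
    unfolding PW_LR_one_eq using zero_input_prob_nonneg[OF assms] by (intro sum_mono) auto
  then show ?thesis
    unfolding sum_zero_input_prob[OF assms] using zero_input_prob_nonneg[OF assms]
    by (auto simp: PW_LR_one_eq intro: sum_nonneg)
qed

lemma synth_Cons_append: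
  assumes "length xs = 2 ^ length bs" "length zs = 2 ^ length bs"
  shows "synth V (b # bs) (xs @ zs) u =
    (if b then (1/2) * synth V bs xs u * synth V bs zs u
     else (\<Sum>u2\<in>UNIV. (1/2) * synth V bs xs (u \<noteq> u2) * synth V bs zs u2))"
  using assms by (simp add: Let_def)

lemma LR_is_one_minus_append:
  assumes "length xs = 2 ^ length bs" "length zs = 2 ^ length bs"
  shows "LR_is_one V (False # bs) (xs @ zs) \<longleftrightarrow> LR_is_one V bs xs \<or> LR_is_one V bs zs"
proof -
  have cross: "a1 * b2 / 2 + b1 * a2 / 2 = b1 * b2 / 2 + a1 * a2 / 2 \<longleftrightarrow> a1 = b1 \<or> a2 = b2"
    for a1 b1 a2 b2 :: real
  proof -
    have "a1 * b2 / 2 + b1 * a2 / 2 = b1 * b2 / 2 + a1 * a2 / 2 \<longleftrightarrow> (a1 - b1) * (b2 - a2) = 0"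
      by (auto simp: algebra_simps)
    then show ?thesis by auto
  qed
  show ?thesis
    unfolding LR_is_one_def synth_Cons_append[OF assms]
    by (simp add: UNIV_bool) (rule cross)
qed

lemma LR_is_one_plus_append:
  assumes "length xs = 2 ^ length bs" "length zs = 2 ^ length bs"
    and "LR_is_one V bs xs" "LR_is_one V bs zs"
  shows "LR_is_one V (True # bs) (xs @ zs)"
  using assms unfolding LR_is_one_def synth_Cons_append[OF assms(1,2)] by simp

lemma PW_LR_one_Cons:
  "PW_LR_one W V (b # bs) =
    (\<Sum>xs | length xs = 2 ^ length bs. \<Sum>zs | length zs = 2 ^ length bs.
       zero_input_prob W xs * zero_input_prob W zs * of_bool (LR_is_one V (b # bs) (xs @ zs)))"
  unfolding PW_LR_one_eq by (simp add: mult_2 sum_lists_length_add zero_input_prob_append)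

lemma PW_LR_one_minus:
  assumes "bdmc W"
  shows "PW_LR_one W V (False # bs) = 2 * PW_LR_one W V bs - (PW_LR_one W V bs)\<^sup>2"
proof -
  let ?L = "{ys. length ys = 2 ^ length bs}" and ?P = "zero_input_prob W"
  let ?I = "\<lambda>ys. of_bool (LR_is_one V bs ys) :: real" and ?p = "PW_LR_one W V bs"
  have "PW_LR_one W V (False # bs) = (\<Sum>xs\<in>?L. \<Sum>zs\<in>?L.
      ?P xs * ?I xs * ?P zs + ?P xs * (?P zs * ?I zs) - (?P xs * ?I xs) * (?P zs * ?I zs))"
    unfolding PW_LR_one_Cons by (intro sum.cong refl) (auto simp: LR_is_one_minus_append)
  also have "\<dots> = ?p * (\<Sum>zs\<in>?L. ?P zs) + (\<Sum>xs\<in>?L. ?P xs) * ?p - ?p * ?p"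
    unfolding PW_LR_one_eq sum_subtractf sum.distrib sum_product by simp
  finally show ?thesis
    by (simp add: sum_zero_input_prob[OF assms] power2_eq_square)
qed

lemma PW_LR_one_plus:
  assumes "bdmc W"
  shows "(PW_LR_one W V bs)\<^sup>2 \<le> PW_LR_one W V (True # bs)"
proof -
  let ?L = "{ys. length ys = 2 ^ length bs}" and ?P = "zero_input_prob W"
  let ?I = "\<lambda>ys. of_bool (LR_is_one V bs ys) :: real"
  have "(PW_LR_one W V bs)\<^sup>2 = (\<Sum>xs\<in>?L. \<Sum>zs\<in>?L. (?P xs * ?I xs) * (?P zs * ?I zs))"
    unfolding power2_eq_square PW_LR_one_eq sum_product ..
  also have "\<dots> \<le> PW_LR_one W V (True # bs)"
    unfolding PW_LR_one_Cons using zero_input_prob_nonneg[OF assms]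
    by (intro sum_mono) (auto simp: LR_is_one_plus_append)
  finally show ?thesis .
qed

lemma PW_LR_one_le_average:
  assumes "bdmc W"
  shows "PW_LR_one W V bs \<le> (PW_LR_one W V (True # bs) + PW_LR_one W V (False # bs)) / 2"
  using PW_LR_one_plus[OF assms, of V bs] PW_LR_one_minus[OF assms, of V bs] by simp

section \<open>The coin-tossing space and paths of signs\<close>

lemma prob_space_coin_space: "prob_space coin_space"
  unfolding coin_space_def by (rule prob_space_PiM) (rule prob_space_measure_pmf)

interpretation coin: prob_space coin_space
  by (rule prob_space_coin_space)

lemma space_coin_space [simp]: "space coin_space = UNIV"
  by (simp add: coin_space_def space_PiM)

lemma component_in_sets_coin_space: "{\<omega>. \<omega> k = b} \<in> sets coin_space"
proof -
  have "(\<lambda>\<omega>. \<omega> k) \<in> coin_space \<rightarrow>\<^sub>M measure_pmf (pmf_of_set UNIV)"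
    unfolding coin_space_def by (rule measurable_component_singleton) simp
  from measurable_sets[OF this, of "{b}"] show ?thesis
    by (simp add: vimage_def)
qed

lemma cylinder_in_sets:
  assumes "space F = UNIV" "finite J" "\<And>k b. k \<in> J \<Longrightarrow> {\<omega>. \<omega> k = b} \<in> sets F"
  shows "{\<omega>. \<forall>k\<in>J. \<omega> k = c k} \<in> sets F"
  using assms(2,3)
proof (induction J rule: finite_induct)
  case empty
  then show ?case using sets.top[of F] assms(1) by simp
next
  case (insert j J)
  have "{\<omega>. \<forall>k\<in>insert j J. \<omega> k = c k} = {\<omega>. \<omega> j = c j} \<inter> {\<omega>. \<forall>k\<in>J. \<omega> k = c k}"
    by auto
  then show ?case using insert by auto
qed

lemma measure_coin_space_cylinder:
  assumes "finite J"
  shows "measure coin_space {\<omega>. \<forall>k\<in>J. \<omega> k = c k} = (1/2) ^ card J"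
proof -
  let ?B = "\<lambda>_::nat. measure_pmf (pmf_of_set (UNIV :: bool set))"
  have "{\<omega>. \<forall>k\<in>J. \<omega> k = c k} = prod_emb UNIV ?B J (PiE J (\<lambda>k. {c k}))"
    by (auto simp: prod_emb_iff space_PiM PiE_iff extensional_def)
  then have "emeasure coin_space {\<omega>. \<forall>k\<in>J. \<omega> k = c k} = (\<Prod>k\<in>J. emeasure (?B k) {c k})"
    unfolding coin_space_def using assms
    by (simp add: emeasure_PiM_emb prob_space_measure_pmf)
  also have "\<dots> = (\<Prod>k\<in>J. ennreal (1/2))"
    by (simp add: emeasure_pmf_single)
  also have "\<dots> = ennreal ((1/2) ^ card J)"
    by (subst prod_ennreal) simp_all
  finally show ?thesis
    by (simp add: coin.emeasure_eq_measure)
qed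

lemma length_path [simp]: "length (path n \<omega>) = n"
  by (simp add: path_def)

lemma path_Suc: "path (Suc n) \<omega> = \<omega> n # path n \<omega>"
  by (simp add: path_def)

lemma path_eq_iff: "path n \<omega> = bs \<longleftrightarrow> length bs = n \<and> (\<forall>k\<in>{..<n}. \<omega> k = rev bs ! k)"
  unfolding path_def rev_swap by (auto simp: list_eq_iff_nth_eq)

lemma measure_path_eq:
  assumes "length bs = n"
  shows "measure coin_space {\<omega>. path n \<omega> = bs} = (1/2) ^ n"
  using measure_coin_space_cylinder[of "{..<n}" "\<lambda>k. rev bs ! k"] assms
  by (simp add: path_eq_iff)

lemma path_measurable:
  assumes "space F = UNIV" "\<And>k b. k < n \<Longrightarrow> {\<omega>. \<omega> k = b} \<in> sets F"
  shows "path n \<in> F \<rightarrow>\<^sub>M count_space UNIV"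
  unfolding measurable_count_space_eq2_countable
proof (intro conjI ballI)
  fix bs :: "bool list"
  have "{\<omega>. \<forall>k\<in>{..<n}. \<omega> k = rev bs ! k} \<in> sets F"
    using assms by (intro cylinder_in_sets) auto
  then show "path n -` {bs} \<inter> space F \<in> sets F"
    by (cases "length bs = n") (auto simp: assms(1) vimage_def path_eq_iff)
qed simp

lemma borel_measurable_path_coin_space [measurable]:
  "(\<lambda>\<omega>. g (path n \<omega>) :: 'a::topological_space) \<in> borel_measurable coin_space"
  by (rule measurable_compose[OF path_measurable]) (auto simp: component_in_sets_coin_space)

lemma path_eq_in_sets_coin_space: "{\<omega>. path n \<omega> = bs} \<in> sets coin_space"
  using measurable_sets[OF path_measurable, of coin_space n "{bs}"]
  by (simp add: component_in_sets_coin_space vimage_def)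

lemma integrable_indicator_path_eq:
  "integrable coin_space (indicator {\<omega>. path n \<omega> = bs} :: _ \<Rightarrow> real)"
  by (intro integrable_real_indicator path_eq_in_sets_coin_space) (simp add: less_top[symmetric])

lemma fun_path_eq_sum_indicator:
  fixes g :: "bool list \<Rightarrow> real"
  shows "g (path n \<omega>) = (\<Sum>bs | length bs = n. g bs * indicator {\<omega>. path n \<omega> = bs} \<omega>)"
proof -
  have "(\<Sum>bs | length bs = n. g bs * indicator {\<omega>. path n \<omega> = bs} \<omega>) =
      (\<Sum>bs\<in>{path n \<omega>}. g bs * indicator {\<omega>. path n \<omega> = bs} \<omega>)"
    using finite_lists_length_UNIV
    by (intro sum.mono_neutral_right) (auto split: split_indicator)
  then show ?thesis by simp
qed

lemma integrable_path: "integrable coin_space (\<lambda>\<omega>. g (path n \<omega>) :: real)"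
proof -
  have "integrable coin_space (\<lambda>\<omega>. g bs * indicator {\<omega>. path n \<omega> = bs} \<omega>)" for bs
    by (rule integrable_real_mult_indicator[OF path_eq_in_sets_coin_space coin.integrable_const])
  then show ?thesis
    by (subst fun_path_eq_sum_indicator) (rule Bochner_Integration.integrable_sum)
qed

lemma integral_path:
  fixes g :: "bool list \<Rightarrow> real"
  shows "(\<integral>\<omega>. g (path n \<omega>) \<partial>coin_space) = (\<Sum>bs | length bs = n. g bs) / 2 ^ n"
proof -
  have "(\<integral>\<omega>. g (path n \<omega>) \<partial>coin_space) =
      (\<integral>\<omega>. (\<Sum>bs | length bs = n. g bs * indicator {\<omega>. path n \<omega> = bs} \<omega>) \<partial>coin_space)"
    by (subst fun_path_eq_sum_indicator) rule
  also have "\<dots> = (\<Sum>bs | length bs = n. g bs * measure coin_space {\<omega>. path n \<omega> = bs})"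
    by (subst Bochner_Integration.integral_sum)
       (auto intro!: integrable_real_mult_indicator path_eq_in_sets_coin_space
             simp: path_eq_in_sets_coin_space integrable_indicator_path_eq)
  also have "\<dots> = (\<Sum>bs | length bs = n. g bs / 2 ^ n)"
    by (intro sum.cong) (auto simp: measure_path_eq power_one_over)
  finally show ?thesis by (simp add: sum_divide_distrib)
qed

lemma integral_path_Suc:
  fixes g :: "bool list \<Rightarrow> real"
  shows "(\<integral>\<omega>. g (path (Suc n) \<omega>) \<partial>coin_space) =
    (\<integral>\<omega>. (g (True # path n \<omega>) + g (False # path n \<omega>)) / 2 \<partial>coin_space)"
proof -
  have "(\<Sum>bs | length bs = Suc n. g bs) / 2 ^ Suc n =
      (\<Sum>bs | length bs = n. (g (True # bs) + g (False # bs)) / 2) / 2 ^ n"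
    by (simp add: sum_lists_length_Suc UNIV_bool sum.distrib add.commute
        flip: sum_divide_distrib)
  then show ?thesis
    unfolding integral_path[of g] integral_path[of "\<lambda>bs. (g (True # bs) + g (False # bs)) / 2"] .
qed

lemma integrable_path_path_Suc:
  "integrable coin_space (\<lambda>\<omega>. g (path n \<omega>) (path (Suc n) \<omega>) :: real)"
  using integrable_path[of "\<lambda>bs. g (tl bs) bs" "Suc n"] by (simp add: path_Suc)

lemma space_coin_filtration [simp]: "space (coin_filtration n) = UNIV"
  by (simp add: coin_filtration_def space_measure_of_conv)

lemma sets_coin_filtration:
  "sets (coin_filtration n) = sigma_sets UNIV {{\<omega>. \<omega> k = b} | k b. k < n}"
  unfolding coin_filtration_def by (subst sets_measure_of) auto

lemma component_in_sets_coin_filtration: "k < n \<Longrightarrow> {\<omega>. \<omega> k = b} \<in> sets (coin_filtration n)"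
  unfolding sets_coin_filtration by (rule sigma_sets.Basic) blast

lemma sets_coin_filtration_mono: "n \<le> m \<Longrightarrow> sets (coin_filtration n) \<subseteq> sets (coin_filtration m)"
  unfolding sets_coin_filtration by (rule sigma_sets_subseteq) auto

lemma subalgebra_coin_filtration: "subalgebra coin_space (coin_filtration n)"
proof -
  have "sigma_sets UNIV {{\<omega>. \<omega> k = b} | k b. k < n} \<subseteq> sets coin_space"
    using sets.sigma_sets_subset[of "{{\<omega>. \<omega> k = b} | k b. k < n}" coin_space]
      component_in_sets_coin_space by auto
  then show ?thesis unfolding subalgebra_def sets_coin_filtration by simp
qed

lemma borel_measurable_path_coin_filtration:
  "(\<lambda>\<omega>. g (path n \<omega>) :: 'a::topological_space) \<in> borel_measurable (coin_filtration n)"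
  by (rule measurable_compose[OF path_measurable]) (auto simp: component_in_sets_coin_filtration)

lemma sets_coin_filtration_eq_vimage_path:
  "A \<in> sets (coin_filtration n) \<Longrightarrow> \<exists>S. A = path n -` S"
  unfolding sets_coin_filtration
proof (induction rule: sigma_sets.induct)
  case (Basic a)
  then obtain k b where "a = {\<omega>. \<omega> k = b}" "k < n" by blast
  then have "a = path n -` {bs. length bs = n \<and> rev bs ! k = b}"
    by (auto simp: path_def rev_map)
  then show ?case by blast
next
  case Empty
  then show ?case by (intro exI[of _ "{}"]) simp
next
  case (Compl a)
  then obtain S where "a = path n -` S" by blast
  then show ?case by (intro exI[of _ "- S"]) auto
next
  case (Union a)
  then obtain S where "\<And>i. a i = path n -` S i" by metis
  then show ?case by (intro exI[of _ "\<Union>i. S i"]) auto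
qed

lemma cond_exp_path_Suc:
  fixes g :: "bool list \<Rightarrow> real"
  shows "AE \<omega> in coin_space.
    real_cond_exp coin_space (coin_filtration n) (\<lambda>\<omega>. g (path (Suc n) \<omega>)) \<omega> =
      (g (True # path n \<omega>) + g (False # path n \<omega>)) / 2"
proof -
  interpret sigma_finite_subalgebra coin_space "coin_filtration n"
    by (intro finite_measure_subalgebra_is_sigma_finite)
       (simp add: finite_measure_subalgebra_def finite_measure_subalgebra_axioms_def
          subalgebra_coin_filtration)
  let ?g = "\<lambda>\<omega>. (g (True # path n \<omega>) + g (False # path n \<omega>)) / 2"
  show ?thesis
  proof (rule real_cond_exp_charact)
    fix A assume "A \<in> sets (coin_filtration n)"
    then obtain S where "A = path n -` S"
      using sets_coin_filtration_eq_vimage_path by blast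
    then have A: "indicator A \<omega> = indicator S (path n \<omega>)" for \<omega> :: "nat \<Rightarrow> bool"
      by (simp split: split_indicator)
    let ?h = "\<lambda>bs. indicator S (tl bs) * g bs"
    have "(\<integral>\<omega>\<in>A. g (path (Suc n) \<omega>) \<partial>coin_space) = (\<integral>\<omega>. ?h (path (Suc n) \<omega>) \<partial>coin_space)"
      unfolding set_lebesgue_integral_def A by (simp add: path_Suc)
    also have "\<dots> = (\<integral>\<omega>. (?h (True # path n \<omega>) + ?h (False # path n \<omega>)) / 2 \<partial>coin_space)"
      by (rule integral_path_Suc)
    also have "\<dots> = (\<integral>\<omega>\<in>A. ?g \<omega> \<partial>coin_space)"
      unfolding set_lebesgue_integral_def A by (simp add: algebra_simps add_divide_distrib)
    finally show "(\<integral>\<omega>\<in>A. g (path (Suc n) \<omega>) \<partial>coin_space) = (\<integral>\<omega>\<in>A. ?g \<omega> \<partial>coin_space)" .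
  next
    show "integrable coin_space (\<lambda>\<omega>. g (path (Suc n) \<omega>))" "integrable coin_space ?g"
      by (rule integrable_path)+
    show "?g \<in> borel_measurable (coin_filtration n)"
      by (rule borel_measurable_path_coin_filtration)
  qed
qed

lemma submartingale_path:
  assumes "\<And>bs. f bs \<le> (f (True # bs) + f (False # bs)) / 2"
  shows "submartingale coin_space coin_filtration (\<lambda>n \<omega>. f (path n \<omega>))"
  unfolding submartingale_def
proof (intro conjI allI impI)
  fix n
  show "AE \<omega> in coin_space.
      f (path n \<omega>) \<le> real_cond_exp coin_space (coin_filtration n) (\<lambda>\<omega>. f (path (Suc n) \<omega>)) \<omega>"
    using cond_exp_path_Suc[of n f]
  proof eventually_elim
    case (elim \<omega>)
    then show ?case using assms[of "path n \<omega>"] by linarith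
  qed
qed (simp_all add: subalgebra_coin_filtration sets_coin_filtration_mono
       borel_measurable_path_coin_filtration integrable_path)

section \<open>Upcrossings of a real sequence\<close>

(* upcrossing_armed x a b k: at time k an upcrossing of [a, b] has begun (the sequence has been
   at most a since the last completed upcrossing) but is not yet complete. *)

fun upcrossing_armed :: "(nat \<Rightarrow> real) \<Rightarrow> real \<Rightarrow> real \<Rightarrow> nat \<Rightarrow> bool" where
  "upcrossing_armed x a b 0 \<longleftrightarrow> x 0 \<le> a"
| "upcrossing_armed x a b (Suc k) \<longleftrightarrow>
    (if upcrossing_armed x a b k then x (Suc k) < b else x (Suc k) \<le> a)"

fun upcrossings :: "(nat \<Rightarrow> real) \<Rightarrow> real \<Rightarrow> real \<Rightarrow> nat \<Rightarrow> nat" where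
  "upcrossings x a b 0 = 0"
| "upcrossings x a b (Suc k) =
    upcrossings x a b k + of_bool (upcrossing_armed x a b k \<and> b \<le> x (Suc k))"

lemma upcrossing_armed_cong:
  "(\<And>i. i \<le> k \<Longrightarrow> x i = y i) \<Longrightarrow> upcrossing_armed x a b k = upcrossing_armed y a b k"
  by (induction k) auto

lemma upcrossings_cong:
  "(\<And>i. i \<le> k \<Longrightarrow> x i = y i) \<Longrightarrow> upcrossings x a b k = upcrossings y a b k"
  by (induction k) (auto simp: upcrossing_armed_cong[of _ x y])

lemma upcrossings_mono: "k \<le> l \<Longrightarrow> upcrossings x a b k \<le> upcrossings x a b l"
  by (induction l) (auto simp: le_Suc_eq)

lemma upcrossings_le_gains:
  "(b - a) * upcrossings x a b k + (if upcrossing_armed x a b k then x k - a else 0) \<le>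
    (\<Sum>j<k. of_bool (upcrossing_armed x a b j) * (x (Suc j) - x j))"
proof (induction k)
  case (Suc k)
  then show ?case
    by (cases "upcrossing_armed x a b k"; cases "b \<le> x (Suc k)"; cases "x (Suc k) \<le> a")
       (auto simp: algebra_simps)
qed simp

lemma upcrossings_le_idle_gains:
  assumes "\<And>i. x i \<in> {0..1}"
  shows "(b - a) * upcrossings x a b k \<le>
    1 + \<bar>a\<bar> - (\<Sum>j<k. (1 - of_bool (upcrossing_armed x a b j)) * (x (Suc j) - x j))"
proof -
  have "(\<Sum>j<k. of_bool (upcrossing_armed x a b j) * (x (Suc j) - x j)) =
      (\<Sum>j<k. x (Suc j) - x j) - (\<Sum>j<k. (1 - of_bool (upcrossing_armed x a b j)) * (x (Suc j) - x j))"
    by (simp add: algebra_simps flip: sum_subtractf)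
  moreover have "(\<Sum>j<k. x (Suc j) - x j) = x k - x 0"
    by (rule sum_lessThan_telescope)
  moreover have "- \<bar>a\<bar> \<le> (if upcrossing_armed x a b k then x k - a else 0)"
    using assms[of k] by auto
  moreover have "x k \<le> 1" "0 \<le> x 0"
    using assms by auto
  ultimately show ?thesis
    using upcrossings_le_gains[of b a x k] by linarith
qed

lemma upcrossings_less:
  assumes "upcrossing_armed x a b j" "b \<le> x (Suc (j + d))"
  shows "upcrossings x a b j < upcrossings x a b (Suc (j + d))"
  using assms
proof (induction d arbitrary: j)
  case (Suc d)
  show ?case
  proof (cases "b \<le> x (Suc j)")
    case True
    then have "upcrossings x a b j < upcrossings x a b (Suc j)" using Suc.prems by simp
    also have "\<dots> \<le> upcrossings x a b (Suc (j + Suc d))" by (rule upcrossings_mono) simp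
    finally show ?thesis .
  next
    case False
    then have "upcrossing_armed x a b (Suc j)" using Suc.prems by simp
    then have "upcrossings x a b (Suc j) < upcrossings x a b (Suc (Suc j + d))"
      by (rule Suc.IH) (use Suc.prems(2) in simp)
    moreover have "upcrossings x a b j \<le> upcrossings x a b (Suc j)"
      by (rule upcrossings_mono) simp
    ultimately show ?thesis by simp
  qed
qed simp

lemma upcrossings_unbounded:
  assumes "a < b" and low: "\<exists>\<^sub>F n in sequentially. x n \<le> a"
    and high: "\<exists>\<^sub>F n in sequentially. b \<le> x n"
  shows "\<exists>k. N \<le> upcrossings x a b k"
proof (induction N)
  case (Suc N)
  then obtain k where k: "N \<le> upcrossings x a b k" by blast
  obtain j where j: "k \<le> j" "x j \<le> a"
    using low by (auto simp: frequently_sequentially)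
  obtain d where d: "b \<le> x (Suc (j + d))"
    using high by (auto simp: frequently_sequentially dest!: spec[of _ "Suc j"] le_Suc_ex)
  have "upcrossing_armed x a b j"
    using j(2) \<open>a < b\<close> by (cases j) auto
  then have "upcrossings x a b j < upcrossings x a b (Suc (j + d))"
    using d by (rule upcrossings_less)
  moreover have "upcrossings x a b k \<le> upcrossings x a b j"
    using j(1) by (rule upcrossings_mono)
  ultimately show ?case using k by (intro exI[of _ "Suc (j + d)"]) simp
qed simp

lemma convergent_if_upcrossings_bounded:
  fixes x :: "nat \<Rightarrow> real"
  assumes bounded: "\<And>k. \<bar>x k\<bar> \<le> M"
    and upcr: "\<And>a b::rat. a < b \<Longrightarrow> \<exists>C. \<forall>k. real (upcrossings x (of_rat a) (of_rat b) k) \<le> C"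
  shows "convergent x"
proof -
  let ?lo = "liminf (\<lambda>n. ereal (x n))" and ?hi = "limsup (\<lambda>n. ereal (x n))"
  have "- M \<le> x k" "x k \<le> M" for k
    using bounded[of k] by auto
  then have "- M \<le> ?lo" "?hi \<le> M"
    by (auto intro!: Liminf_bounded Limsup_bounded always_eventually)
  have "\<not> ?lo < ?hi"
  proof
    assume "?lo < ?hi"
    then obtain a :: rat where a: "?lo < of_rat a" "of_rat a < ?hi"
      using ereal_dense3 by blast
    then obtain b :: rat where b: "ereal (of_rat a) < of_rat b" "of_rat b < ?hi"
      using ereal_dense3 by blast
    then have ab: "of_rat a < (of_rat b :: real)" by simp
    have "\<not> ereal (of_rat a) \<le> ?lo" using a(1) by simp
    then obtain y where "y < ereal (of_rat a)" "\<exists>\<^sub>F n in sequentially. \<not> y < ereal (x n)"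
      unfolding le_Liminf_iff by (auto simp: not_eventually)
    then have low: "\<exists>\<^sub>F n in sequentially. x n \<le> of_rat a"
      by (elim frequently_elim1) (metis ereal_less_eq(3) le_less_trans less_imp_le not_less)
    have "\<not> ?hi \<le> ereal (of_rat b)" using b(2) by simp
    then obtain y where "ereal (of_rat b) < y" "\<exists>\<^sub>F n in sequentially. \<not> ereal (x n) < y"
      unfolding Limsup_le_iff by (auto simp: not_eventually)
    then have high: "\<exists>\<^sub>F n in sequentially. of_rat b \<le> x n"
      by (elim frequently_elim1) (metis ereal_less_eq(3) less_le_trans less_imp_le not_less)
    obtain C where C: "\<forall>k. real (upcrossings x (of_rat a) (of_rat b) k) \<le> C"
      using upcr[of a b] ab by (auto simp: of_rat_less)
    obtain k where "nat \<lceil>C\<rceil> + 1 \<le> upcrossings x (of_rat a) (of_rat b) k"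
      using upcrossings_unbounded[OF ab low high] by blast
    then have "C < real (upcrossings x (of_rat a) (of_rat b) k)"
      by linarith
    with C show False by (meson not_le)
  qed
  then obtain L where "?lo = ereal L" "?hi = ereal L"
    using \<open>- M \<le> ?lo\<close> \<open>?hi \<le> M\<close> Liminf_le_Limsup[of sequentially "\<lambda>n. ereal (x n)"]
    by (cases ?lo; cases ?hi) auto
  then have "x \<longlonglongrightarrow> L" by (intro limsup_le_liminf_real) auto
  then show ?thesis by (rule convergentI)
qed

section \<open>Convergence of bounded submartingales on the binary tree\<close>

definition values_along :: "(bool list \<Rightarrow> real) \<Rightarrow> bool list \<Rightarrow> nat \<Rightarrow> real" where
  "values_along f bs i = f (drop (length bs - i) bs)"

lemma values_along_path: "i \<le> n \<Longrightarrow> values_along f (path n \<omega>) i = f (path i \<omega>)"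
  by (simp add: values_along_def path_def drop_rev take_map)

lemma upcrossing_armed_path:
  "upcrossing_armed (\<lambda>i. f (path i \<omega>)) a b k = upcrossing_armed (values_along f (path k \<omega>)) a b k"
  by (rule upcrossing_armed_cong) (simp add: values_along_path)

lemma upcrossings_path:
  "upcrossings (\<lambda>i. f (path i \<omega>)) a b k = upcrossings (values_along f (path k \<omega>)) a b k"
  by (rule upcrossings_cong) (simp add: values_along_path)

context
  fixes f :: "bool list \<Rightarrow> real"
  assumes f_range: "\<And>bs. f bs \<in> {0..1}"
    and f_le_average: "\<And>bs. f bs \<le> (f (True # bs) + f (False # bs)) / 2"
begin

lemma integral_predictable_increment_nonneg:
  assumes "\<And>bs. 0 \<le> G bs"
  shows "0 \<le> (\<integral>\<omega>. G (path n \<omega>) * (f (path (Suc n) \<omega>) - f (path n \<omega>)) \<partial>coin_space)"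
proof -
  let ?h = "\<lambda>bs. G (tl bs) * (f bs - f (tl bs))"
  have "(\<integral>\<omega>. G (path n \<omega>) * (f (path (Suc n) \<omega>) - f (path n \<omega>)) \<partial>coin_space) =
      (\<integral>\<omega>. ?h (path (Suc n) \<omega>) \<partial>coin_space)"
    by (simp add: path_Suc)
  also have "\<dots> = (\<integral>\<omega>. (?h (True # path n \<omega>) + ?h (False # path n \<omega>)) / 2 \<partial>coin_space)"
    by (rule integral_path_Suc)
  also have "\<dots> = (\<integral>\<omega>. G (path n \<omega>) *
      ((f (True # path n \<omega>) + f (False # path n \<omega>)) / 2 - f (path n \<omega>)) \<partial>coin_space)"
    by (simp add: algebra_simps add_divide_distrib diff_divide_distrib)
  finally show ?thesis
    using f_le_average assms by (auto intro!: integral_nonneg_AE)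
qed

lemma upcrossing_inequality:
  assumes "a < b"
  shows "(b - a) * (\<integral>\<omega>. real (upcrossings (\<lambda>i. f (path i \<omega>)) a b k) \<partial>coin_space) \<le> 1 + \<bar>a\<bar>"
proof -
  define D where "D j \<omega> = (1 - of_bool (upcrossing_armed (\<lambda>i. f (path i \<omega>)) a b j)) *
      (f (path (Suc j) \<omega>) - f (path j \<omega>))" for j \<omega>
  have D_eq: "D j = (\<lambda>\<omega>. (1 - of_bool (upcrossing_armed (values_along f (path j \<omega>)) a b j)) *
      (f (path (Suc j) \<omega>) - f (path j \<omega>)))" for j
    by (simp add: D_def upcrossing_armed_path fun_eq_iff)
  have D_integrable: "integrable coin_space (D j)" for j
    unfolding D_eq by (rule integrable_path_path_Suc)
  have U_integrable: "integrable coin_space (\<lambda>\<omega>. real (upcrossings (\<lambda>i. f (path i \<omega>)) a b k))"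
    unfolding upcrossings_path by (rule integrable_path)
  have pointwise: "(b - a) * real (upcrossings (\<lambda>i. f (path i \<omega>)) a b k) \<le>
      1 + \<bar>a\<bar> - (\<Sum>j<k. D j \<omega>)" for \<omega>
    unfolding D_def by (rule upcrossings_le_idle_gains) (use f_range in simp)
  have "(b - a) * (\<integral>\<omega>. real (upcrossings (\<lambda>i. f (path i \<omega>)) a b k) \<partial>coin_space) =
      (\<integral>\<omega>. (b - a) * real (upcrossings (\<lambda>i. f (path i \<omega>)) a b k) \<partial>coin_space)"
    by simp
  also have "\<dots> \<le> (\<integral>\<omega>. 1 + \<bar>a\<bar> - (\<Sum>j<k. D j \<omega>) \<partial>coin_space)"
    by (intro integral_mono integrable_mult_right U_integrable Bochner_Integration.integrable_diff
        Bochner_Integration.integrable_sum coin.integrable_const D_integrable pointwise)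
  also have "\<dots> = 1 + \<bar>a\<bar> - (\<Sum>j<k. \<integral>\<omega>. D j \<omega> \<partial>coin_space)"
    by (subst Bochner_Integration.integral_diff)
       (use D_integrable coin.prob_space in \<open>auto simp: Bochner_Integration.integral_sum\<close>)
  also have "\<dots> \<le> 1 + \<bar>a\<bar>"
    \<comment> \<open>betting only while not armed is a nonnegative predictable transform of a submartingale\<close>
    unfolding D_eq by (auto intro!: sum_nonneg integral_predictable_increment_nonneg)
  finally show ?thesis .
qed

lemma upcrossings_bounded_AE:
  assumes "a < b"
  shows "AE \<omega> in coin_space. \<exists>C. \<forall>k. real (upcrossings (\<lambda>i. f (path i \<omega>)) a b k) \<le> C"
proof -
  define u where "u k \<omega> = ennreal (upcrossings (\<lambda>i. f (path i \<omega>)) a b k)" for k \<omega>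
  have u_measurable: "u k \<in> borel_measurable coin_space" for k
    unfolding u_def upcrossings_path by measurable
  have "incseq u"
    by (auto simp: incseq_def le_fun_def u_def intro!: ennreal_leI upcrossings_mono)
  have "(\<integral>\<^sup>+\<omega>. u k \<omega> \<partial>coin_space) \<le> ennreal ((1 + \<bar>a\<bar>) / (b - a))" for k
  proof -
    have "(\<integral>\<^sup>+\<omega>. u k \<omega> \<partial>coin_space) =
        ennreal (\<integral>\<omega>. real (upcrossings (\<lambda>i. f (path i \<omega>)) a b k) \<partial>coin_space)"
      unfolding u_def upcrossings_path by (intro nn_integral_eq_integral integrable_path) auto
    also have "\<dots> \<le> ennreal ((1 + \<bar>a\<bar>) / (b - a))"
      using upcrossing_inequality[OF assms, of k] assms
      by (intro ennreal_leI) (simp add: field_simps)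
    finally show ?thesis .
  qed
  then have "(\<integral>\<^sup>+\<omega>. (SUP k. u k \<omega>) \<partial>coin_space) \<le> ennreal ((1 + \<bar>a\<bar>) / (b - a))"
    by (simp add: nn_integral_monotone_convergence_SUP[OF \<open>incseq u\<close> u_measurable] SUP_least)
  then have "(\<integral>\<^sup>+\<omega>. (SUP k. u k \<omega>) \<partial>coin_space) \<noteq> \<infinity>"
    unfolding infinity_ennreal_def using ennreal_neq_top neq_top_trans by blast
  then have "AE \<omega> in coin_space. (SUP k. u k \<omega>) \<noteq> \<infinity>"
    by (intro nn_integral_PInf_AE) (use u_measurable in measurable)
  then show ?thesis
  proof eventually_elim
    case (elim \<omega>)
    have "real (upcrossings (\<lambda>i. f (path i \<omega>)) a b k) \<le> enn2real (SUP k. u k \<omega>)" for k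
    proof -
      have "u k \<omega> \<le> (SUP k. u k \<omega>)" by (rule SUP_upper) simp
      then show ?thesis using elim unfolding u_def
        by (metis enn2real_ennreal enn2real_mono infinity_ennreal_def of_nat_0_le_iff
            top.not_eq_extremum)
    qed
    then show ?case by blast
  qed
qed

lemma convergent_AE_path: "AE \<omega> in coin_space. convergent (\<lambda>n. f (path n \<omega>))"
proof -
  have "AE \<omega> in coin_space. \<forall>a b :: rat. a < b \<longrightarrow>
      (\<exists>C. \<forall>k. real (upcrossings (\<lambda>i. f (path i \<omega>)) (of_rat a) (of_rat b) k) \<le> C)"
    unfolding AE_all_countable
  proof (intro allI)
    fix a b :: rat
    show "AE \<omega> in coin_space. a < b \<longrightarrow>
        (\<exists>C. \<forall>k. real (upcrossings (\<lambda>i. f (path i \<omega>)) (of_rat a) (of_rat b) k) \<le> C)"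
      using upcrossings_bounded_AE[of "of_rat a" "of_rat b"]
      by (cases "a < b") (simp_all add: of_rat_less)
  qed
  then show ?thesis
  proof eventually_elim
    case (elim \<omega>)
    show ?case
      by (rule convergent_if_upcrossings_bounded[of _ 1]) (use f_range elim in auto)
  qed
qed

end

section \<open>Identifying the limit\<close>

lemma AE_frequently_False: "AE \<omega> in coin_space. \<exists>\<^sub>F k in sequentially. \<not> \<omega> k"
  unfolding frequently_sequentially AE_all_countable
proof
  fix N
  let ?Z = "\<Inter>k\<in>{N..}. {\<omega> :: nat \<Rightarrow> bool. \<omega> k = True}"
  have "?Z \<in> sets coin_space"
    using component_in_sets_coin_space[of _ True] by (intro sets.countable_INT) auto
  have "measure coin_space ?Z \<le> (1/2) ^ j" for j
  proof -
    have "measure coin_space ?Z \<le> measure coin_space {\<omega>. \<forall>k\<in>{N..<N + j}. \<omega> k = True}"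
      by (intro coin.finite_measure_mono cylinder_in_sets component_in_sets_coin_space) auto
    also have "\<dots> = (1/2) ^ j"
      using measure_coin_space_cylinder[of "{N..<N + j}" "\<lambda>_. True"] by simp
    finally show ?thesis .
  qed
  then have "measure coin_space ?Z \<le> 0"
    by (intro LIMSEQ_le_const[OF LIMSEQ_power_zero[of "1/2::real"]]) auto
  then have "measure coin_space ?Z = 0"
    using measure_nonneg[of coin_space ?Z] by linarith
  then have "?Z \<in> null_sets coin_space"
    using \<open>?Z \<in> sets coin_space\<close> by (simp add: coin.emeasure_eq_measure null_sets_def)
  then show "AE \<omega> in coin_space. \<exists>k\<ge>N. \<not> \<omega> k"
    by (rule AE_I') auto
qed

lemma fixed_point_if_frequently_iterated:
  fixes x :: "nat \<Rightarrow> 'a::real_normed_vector"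
  assumes "x \<longlonglongrightarrow> L" "isCont h L" "\<exists>\<^sub>F k in sequentially. x (Suc k) = h (x k)"
  shows "h L = L"
proof (rule ccontr)
  assume "h L \<noteq> L"
  have "(\<lambda>k. x (Suc k) - h (x k)) \<longlonglongrightarrow> L - h L"
    using assms(1,2) by (intro tendsto_intros LIMSEQ_Suc isCont_tendsto_compose[of L h])
  then have "\<forall>\<^sub>F k in sequentially. x (Suc k) - h (x k) \<noteq> 0"
    by (rule tendsto_imp_eventually_ne) (use \<open>h L \<noteq> L\<close> in simp)
  with assms(3) show False
    by (auto simp: frequently_def elim: eventually_mono)
qed

theorem lemma1:
  fixes W V :: "'y::finite \<Rightarrow> bool \<Rightarrow> real"
  assumes "bdmc W" and "bdmc V"
  defines "X \<equiv> (\<lambda>n \<omega>. PW_LR_one W V (path n \<omega>))"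
  shows "submartingale coin_space coin_filtration X
       \<and> (\<forall>n \<omega>. X n \<omega> \<in> {0..1})
       \<and> (AE \<omega> in coin_space. convergent (\<lambda>n. X n \<omega>))
       \<and> (AE \<omega> in coin_space. \<exists>l\<in>{0,1}. (\<lambda>n. X n \<omega>) \<longlonglongrightarrow> l)"
proof -
  note range = PW_LR_one_bounds[OF assms(1), of V]
  note le_average = PW_LR_one_le_average[OF assms(1), of V]
  have convergent: "AE \<omega> in coin_space. convergent (\<lambda>n. X n \<omega>)"
    unfolding X_def using range le_average by (rule convergent_AE_path)
  moreover have "AE \<omega> in coin_space. \<exists>l\<in>{0,1}. (\<lambda>n. X n \<omega>) \<longlonglongrightarrow> l"
    using convergent AE_frequently_False
  proof eventually_elim
    case (elim \<omega>)
    then obtain L where L: "(\<lambda>n. X n \<omega>) \<longlonglongrightarrow> L"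
      by (auto simp: convergent_def)
    have "\<exists>\<^sub>F k in sequentially. X (Suc k) \<omega> = (\<lambda>t. 2 * t - t\<^sup>2) (X k \<omega>)"
      using elim(2) by (rule frequently_elim1) (simp add: X_def path_Suc PW_LR_one_minus[OF assms(1)])
    then have "(\<lambda>t. 2 * t - t\<^sup>2) L = L"
      by (intro fixed_point_if_frequently_iterated[OF L] continuous_intros)
    then have "L * (L - 1) = 0"
      by (simp add: power2_eq_square algebra_simps)
    with L show ?case by auto
  qed
  ultimately show ?thesis
    unfolding X_def using submartingale_path[OF le_average] range by auto
qed

end
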